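(* Let $\Gamma=\{0=\rho_1<\rho_2<\cdots\}$ be an Arf numerical semigroup and $d_i=\rho_{i+1}-\rho_i$ for $i\ge1$. Let $j\ge2$ and let $x$ be an integer with $d_j\le x<d_{j-1}$. Then $\mathrm{Ap}(\Gamma,-d_j)\subseteq\mathrm{Ap}(\Gamma,-x)$. In particular $|\mathrm{Ap}(\Gamma,x)|\ge|\mathrm{Ap}(\Gamma,d_j)|$.
   Context: A numerical semigroup is a subset of $\mathbb N$ containing $0$, closed under addition, with finite complement; its elements listed increasingly are $\rho_1<\rho_2<\cdots$. $\Gamma$ is Arf if $\rho_i+\rho_j-\rho_k\in\Gamma$ for all $i\ge j\ge k$. For $x\in\mathbb Z$, $\mathrm{Ap}(\Gamma,x)=\{s\in\Gamma: s-x\notin\Gamma\}$. *)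

theory Defs
  imports Main "HOL-Library.Infinite_Set"
begin

definition numerical_semigroup :: "nat set \<Rightarrow> bool" where
  "numerical_semigroup G \<longleftrightarrow> 0 \<in> G \<and> (\<forall>a\<in>G. \<forall>b\<in>G. a + b \<in> G) \<and> finite (UNIV - G)"

text \<open>rho G i is the i-th smallest element of G, 1-indexed (rho G 1 = 0).\<close>
definition rho :: "nat set \<Rightarrow> nat \<Rightarrow> nat" where
  "rho G i = enumerate G (i - 1)"

definition gapd :: "nat set \<Rightarrow> nat \<Rightarrow> nat" where
  "gapd G i = rho G (i + 1) - rho G i"

definition Arf :: "nat set \<Rightarrow> bool" where
  "Arf G \<longleftrightarrow> numerical_semigroup G \<and>
     (\<forall>i j k. 1 \<le> k \<and> k \<le> j \<and> j \<le> i \<longrightarrow> rho G i + rho G j - rho G k \<in> G)"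

definition Ap :: "nat set \<Rightarrow> int \<Rightarrow> nat set" where
  "Ap G x = {s \<in> G. int s - x \<notin> int ` G}"

end

theory Submission
  imports Defs
begin

text \<open>
  Write \<open>e = enumerate G\<close>, so that \<open>d\<^sub>j = e j - e (j - 1)\<close>. The Arf property applied to
  \<open>e k \<ge> e j > e (j - 1)\<close> gives \<open>e k + d\<^sub>j \<in> G\<close> for all \<open>k \<ge> j - 1\<close>, and in particular the
  gaps \<open>d\<^sub>i\<close> are non-increasing. Hence an element \<open>s = e k\<close> of \<open>Ap(\<Gamma>, -d\<^sub>j)\<close> has \<open>k < j - 1\<close>, so
  the next element of \<open>\<Gamma>\<close> after \<open>s\<close> is \<open>s + d\<^sub>k\<^sub>+\<^sub>1 \<ge> s + d\<^sub>j\<^sub>-\<^sub>1 > s + x\<close>; as \<open>x \<ge> d\<^sub>j > 0\<close>, \<open>s + x\<close>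
  is a gap of \<open>\<Gamma>\<close>. The cardinality statement follows from the identity
  \<open>|Ap(\<Gamma>, n)| = |Ap(\<Gamma>, -n)| + n\<close> for \<open>n \<ge> 0\<close>.
\<close>

lemma numerical_semigroup_infinite: "numerical_semigroup G \<Longrightarrow> infinite G"
  unfolding numerical_semigroup_def
  by (metis finite_Un Un_Diff_cancel sup_top_right infinite_UNIV_nat)

lemma numerical_semigroup_conductor:
  assumes "numerical_semigroup G"
  obtains c where "\<And>t. c \<le> t \<Longrightarrow> t \<in> G"
proof -
  have "finite (UNIV - G)" using assms unfolding numerical_semigroup_def by blast
  then obtain c where "UNIV - G \<subseteq> {..<c}" using finite_nat_bounded by blast
  then show ?thesis using that by (meson DiffI UNIV_I lessThan_iff not_le subsetD)
qed

lemma enumerate_Suc_le: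
  fixes G :: "nat set"
  assumes "infinite G" "t \<in> G" "enumerate G k < t"
  shows "enumerate G (Suc k) \<le> t"
  using assms by (simp add: enumerate_Suc'' Least_le)

lemma gapd_Suc: "gapd G (Suc m) = enumerate G (Suc m) - enumerate G m"
  by (simp add: gapd_def rho_def)

lemma gapd_Suc_pos: "infinite G \<Longrightarrow> 0 < gapd G (Suc m)"
  by (simp add: gapd_Suc)

lemma Ap_minus_int: "Ap G (- int n) = {s \<in> G. s + n \<notin> G}"
proof -
  have "int s - - int n = int (s + n)" for s by simp
  then show ?thesis unfolding Ap_def by (auto simp: image_iff simp flip: of_nat_add)
qed

lemma Ap_int: "Ap G (int n) = {s \<in> G. \<not> (n \<le> s \<and> s - n \<in> G)}"
proof -
  have "int s - int n \<in> int ` G \<longleftrightarrow> n \<le> s \<and> s - n \<in> G" for s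
  proof
    assume "int s - int n \<in> int ` G"
    then obtain g where "g \<in> G" "int s - int n = int g" by auto
    moreover from this have "s = g + n" by linarith
    ultimately show "n \<le> s \<and> s - n \<in> G" by simp
  next
    assume "n \<le> s \<and> s - n \<in> G"
    then show "int s - int n \<in> int ` G" by (metis image_eqI of_nat_diff)
  qed
  then show ?thesis unfolding Ap_def by auto
qed

lemma finite_Ap_minus_int:
  assumes "numerical_semigroup G"
  shows "finite (Ap G (- int n))"
proof -
  obtain c where c: "\<And>t. c \<le> t \<Longrightarrow> t \<in> G"
    using numerical_semigroup_conductor[OF assms] by blast
  have "s + n < c" if "s + n \<notin> G" for s using c that not_le by blast
  then have "Ap G (- int n) \<subseteq> {..<c}" unfolding Ap_minus_int by fastforce
  then show ?thesis by (rule finite_subset) simp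
qed

text \<open>
  With \<open>T = {s \<in> G. s + n \<in> G}\<close> and a window \<open>{..<c + n}\<close> beyond the conductor \<open>c\<close>, the
  elements of \<open>G\<close> in the window split both as \<open>Ap(-n) \<union> T\<close> and as \<open>Ap(n) \<union> (T + n)\<close>, and the
  window loses exactly the \<open>n\<close> elements \<open>{c..<c + n}\<close> of \<open>T\<close> when \<open>T\<close> is shifted by \<open>n\<close>.
\<close>
lemma card_Ap_int:
  assumes "numerical_semigroup G"
  shows "card (Ap G (int n)) = card (Ap G (- int n)) + n"
proof -
  obtain c where c: "\<And>t. c \<le> t \<Longrightarrow> t \<in> G"
    using numerical_semigroup_conductor[OF assms] by blast
  define T where "T = {s \<in> G. s + n \<in> G}"
  define N where "N = c + n"
  have gap_below: "s + n < c" if "s + n \<notin> G" for s using c that not_le by blast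
  have shift_inj: "inj_on (\<lambda>s. s + n) A" for A :: "nat set" by (simp add: inj_on_def)
  have split_minus: "G \<inter> {..<N} = Ap G (- int n) \<union> (T \<inter> {..<N})"
    unfolding Ap_minus_int T_def N_def using gap_below by fastforce
  have split_plus: "G \<inter> {..<N} = Ap G (int n) \<union> (\<lambda>s. s + n) ` (T \<inter> {..<c})"
  proof (intro equalityI subsetI)
    fix s assume s: "s \<in> G \<inter> {..<N}"
    show "s \<in> Ap G (int n) \<union> (\<lambda>s. s + n) ` (T \<inter> {..<c})"
    proof (cases "s \<in> Ap G (int n)")
      case False
      with s have "n \<le> s" "s - n \<in> G" by (auto simp: Ap_int)
      with s have "s - n \<in> T \<inter> {..<c}" by (auto simp: T_def N_def)
      with \<open>n \<le> s\<close> show ?thesis by (auto intro!: image_eqI[of s _ "s - n"])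
    qed simp
  next
    fix s assume "s \<in> Ap G (int n) \<union> (\<lambda>s. s + n) ` (T \<inter> {..<c})"
    then show "s \<in> G \<inter> {..<N}"
    proof
      assume s: "s \<in> Ap G (int n)"
      have "s < N"
      proof (rule ccontr)
        assume "\<not> s < N"
        then have "n \<le> s" "c \<le> s - n" by (auto simp: N_def)
        with s c show False by (auto simp: Ap_int)
      qed
      with s show ?thesis by (auto simp: Ap_int)
    qed (auto simp: T_def N_def)
  qed
  have split_T: "T \<inter> {..<N} = (T \<inter> {..<c}) \<union> {c..<N}"
    unfolding T_def N_def using c by auto
  have fin: "finite A" if "A \<subseteq> G \<inter> {..<N}" for A
    using that finite_subset by blast
  have "card (G \<inter> {..<N}) = card (Ap G (- int n)) + card (T \<inter> {..<N})"
    unfolding split_minus by (rule card_Un_disjoint) (use split_minus fin in \<open>auto simp: Ap_minus_int T_def\<close>)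
  also have "card (T \<inter> {..<N}) = card (T \<inter> {..<c}) + n"
    unfolding split_T by (subst card_Un_disjoint) (auto simp: N_def)
  finally have "card (G \<inter> {..<N}) = card (Ap G (- int n)) + card (T \<inter> {..<c}) + n"
    by simp
  moreover have "card (G \<inter> {..<N}) = card (Ap G (int n)) + card (T \<inter> {..<c})"
    unfolding split_plus
    by (subst card_Un_disjoint) (use split_plus fin in \<open>auto simp: Ap_int T_def card_image[OF shift_inj]\<close>)
  ultimately show ?thesis by simp
qed

lemma Arf_infinite: "Arf G \<Longrightarrow> infinite G"
  unfolding Arf_def by (simp add: numerical_semigroup_infinite)

lemma Arf_enumerate:
  assumes "Arf G" "k \<le> j" "j \<le> i"
  shows "enumerate G i + enumerate G j - enumerate G k \<in> G"
proof -
  have "rho G (Suc i) + rho G (Suc j) - rho G (Suc k) \<in> G"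
    using assms unfolding Arf_def by auto
  then show ?thesis by (simp add: rho_def)
qed

lemma Arf_enumerate_add_gapd:
  assumes "Arf G" "m \<le> k"
  shows "enumerate G k + gapd G (Suc m) \<in> G"
proof -
  have inf: "infinite G" using Arf_infinite[OF assms(1)] .
  have le: "enumerate G m \<le> enumerate G (Suc m)" using inf by simp
  show ?thesis
  proof (cases "k = m")
    case True
    with le show ?thesis using enumerate_in_set[OF inf] by (simp add: gapd_Suc)
  next
    case False
    with assms have "enumerate G k + enumerate G (Suc m) - enumerate G m \<in> G"
      by (intro Arf_enumerate) auto
    with le show ?thesis by (simp add: gapd_Suc)
  qed
qed

lemma Arf_gapd_antimono:
  assumes "Arf G" "q \<le> p"
  shows "gapd G (Suc p) \<le> gapd G (Suc q)"
proof -
  have inf: "infinite G" using Arf_infinite[OF assms(1)] .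
  have "gapd G (Suc (Suc i)) \<le> gapd G (Suc i)" for i
  proof -
    have "enumerate G (Suc i) + gapd G (Suc i) \<in> G"
      using Arf_enumerate_add_gapd[OF assms(1)] by simp
    moreover have "enumerate G (Suc i) < enumerate G (Suc i) + gapd G (Suc i)"
      using gapd_Suc_pos[OF inf] by simp
    ultimately have "enumerate G (Suc (Suc i)) \<le> enumerate G (Suc i) + gapd G (Suc i)"
      by (rule enumerate_Suc_le[OF inf])
    then show ?thesis by (simp add: gapd_Suc)
  qed
  then have "antimono (\<lambda>i. gapd G (Suc i))" by (simp add: antimono_iff_le_Suc)
  with assms(2) show ?thesis by (metis antimonoD)
qed

lemma Arf_Ap_minus_gapd_subset:
  assumes "Arf G" "gapd G (Suc (Suc m)) \<le> n" "n < gapd G (Suc m)"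
  shows "Ap G (- int (gapd G (Suc (Suc m)))) \<subseteq> Ap G (- int n)"
proof
  have inf: "infinite G" using Arf_infinite[OF assms(1)] .
  fix s assume s: "s \<in> Ap G (- int (gapd G (Suc (Suc m))))"
  then have "s \<in> G" by (simp add: Ap_minus_int)
  then obtain k where k: "enumerate G k = s" using enumerate_Ex[OF inf] by blast
  have "k < Suc m"
  proof (rule ccontr)
    assume "\<not> k < Suc m"
    then have "s + gapd G (Suc (Suc m)) \<in> G"
      using Arf_enumerate_add_gapd[OF assms(1), of "Suc m" k] k by (simp add: not_less)
    with s show False by (simp add: Ap_minus_int)
  qed
  then have "gapd G (Suc m) \<le> gapd G (Suc k)" using Arf_gapd_antimono[OF assms(1)] by simp
  with assms(3) k have "s + n < enumerate G (Suc k)" by (simp add: gapd_Suc)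
  moreover have "enumerate G k < s + n" using k assms(2) gapd_Suc_pos[OF inf, of "Suc m"] by simp
  ultimately have "s + n \<notin> G" using enumerate_Suc_le[OF inf] not_le by blast
  with \<open>s \<in> G\<close> show "s \<in> Ap G (- int n)" by (simp add: Ap_minus_int)
qed

theorem lemma3p5:
  fixes G :: "nat set" and j :: nat and x :: int
  assumes "Arf G"
    and "j \<ge> 2"
    and "int (gapd G j) \<le> x" and "x < int (gapd G (j - 1))"
  shows "Ap G (- int (gapd G j)) \<subseteq> Ap G (- x)
       \<and> card (Ap G x) \<ge> card (Ap G (int (gapd G j)))"
proof -
  obtain m where j: "j = Suc (Suc m)" using assms(2) by (metis add_2_eq_Suc le_Suc_ex)
  obtain n where x: "x = int n" using assms(3) by (metis nonneg_int_cases of_nat_0_le_iff order_trans)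
  have ns: "numerical_semigroup G" using assms(1) unfolding Arf_def by blast
  have subset: "Ap G (- int (gapd G j)) \<subseteq> Ap G (- int n)"
    using assms(3,4) unfolding j x by (intro Arf_Ap_minus_gapd_subset[OF assms(1)]) auto
  then have "card (Ap G (- int (gapd G j))) \<le> card (Ap G (- int n))"
    by (rule card_mono[OF finite_Ap_minus_int[OF ns]])
  then have "card (Ap G (int (gapd G j))) \<le> card (Ap G (int n))"
    using card_Ap_int[OF ns, of n] card_Ap_int[OF ns, of "gapd G j"] assms(3) x by linarith
  with subset show ?thesis by (simp add: x)
qed

end
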